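(* For $n\ge 0$ and a field $k$, let $V_n(k)=M_n(k)\oplus k^n\oplus (k^n)^*$ be the space of triples $\Sigma=(A,B,C)$ with $A\in M_n(k)$, $B\in k^n$ (column), $C\in (k^n)^*$ (row), with $GL_n(k)$ acting by $g\cdot(A,B,C)=(gAg^{-1},gB,Cg^{-1})$. Call $\Sigma$ completely controllable if the $n\times n$ matrix $[B\ AB\ \cdots\ A^{n-1}B]$ is invertible, and completely observable if the $n\times n$ matrix with rows $C, CA,\dots,CA^{n-1}$ is invertible. Let $\mathrm{sys}^{cc}_n$ and $\mathrm{sys}^{co}_n$ be the orbit spaces of the completely controllable, resp. completely observable, triples, and $\overline{M}$ the disjoint union over $n\ge0$ of $\mathrm{sys}^{cc}_n\cup\mathrm{sys}^{co}_n$. Then $\overline{M}$ is of $\mathbb{F}_1$-type: for every finite field $\mathbb{F}_q$, the number of $\mathbb{F}_q$-points of $\mathrm{sys}^{cc}_n\cup\mathrm{sys}^{co}_n$ is $q^{2n}+q^{2n-1}$ for $n\ge1$ (and $1$ for $n=0$), so that $\#\overline{M}(\mathbb{F}_q)=\sum_{k\ge0}q^k$; consequently its $\mathbb{F}_1$-motive is $\prod_{k=0}^{\infty}\frac{s-k}{2\pi}$.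
   Context: The $\mathbb{F}_q$-points of these orbit spaces are the $GL_n(\mathbb{F}_q)$-orbits of triples over $\mathbb{F}_q$ that are completely controllable or completely observable. A variety (or countable disjoint union of varieties) $X$ is of $\mathbb{F}_1$-type if there are integers $a_k$ with $\#X(\mathbb{F}_q)=\sum_k a_kq^k$ for all finite fields $\mathbb{F}_q$; its (Manin) $\mathbb{F}_1$-motive is then $\prod_k\left(\frac{s-k}{2\pi}\right)^{a_k}$ (e.g. the motive of $\mathbb{A}^n$ is $\frac{s-n}{2\pi}$ and that of $\mathbb{P}^n$ is $\prod_{k=0}^n\frac{s-k}{2\pi}$). *)

theory Defs
  imports "Jordan_Normal_Form.Matrix"
begin

definition triples :: "nat \<Rightarrow> ('a::field mat \<times> 'a mat \<times> 'a mat) set" where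
  "triples n = {(A,B,C). A \<in> carrier_mat n n \<and> B \<in> carrier_mat n 1 \<and> C \<in> carrier_mat 1 n}"

definition ctrb_mat :: "nat \<Rightarrow> 'a::field mat \<Rightarrow> 'a mat \<Rightarrow> 'a mat" where
  "ctrb_mat n A B = mat n n (\<lambda>(i,j). (A ^\<^sub>m j * B) $$ (i,0))"

definition obsv_mat :: "nat \<Rightarrow> 'a::field mat \<Rightarrow> 'a mat \<Rightarrow> 'a mat" where
  "obsv_mat n A C = mat n n (\<lambda>(i,j). (C * A ^\<^sub>m i) $$ (0,j))"

definition completely_controllable :: "nat \<Rightarrow> 'a::field mat \<times> 'a mat \<times> 'a mat \<Rightarrow> bool" where
  "completely_controllable n \<Sigma> = (case \<Sigma> of (A,B,C) \<Rightarrow> invertible_mat (ctrb_mat n A B))"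

definition completely_observable :: "nat \<Rightarrow> 'a::field mat \<times> 'a mat \<times> 'a mat \<Rightarrow> bool" where
  "completely_observable n \<Sigma> = (case \<Sigma> of (A,B,C) \<Rightarrow> invertible_mat (obsv_mat n A C))"

definition cc_or_co :: "nat \<Rightarrow> ('a::field mat \<times> 'a mat \<times> 'a mat) set" where
  "cc_or_co n = {\<Sigma> \<in> triples n. completely_controllable n \<Sigma> \<or> completely_observable n \<Sigma>}"

definition gl_orbit_rel :: "nat \<Rightarrow> ('a::field mat \<times> 'a mat \<times> 'a mat) rel" where
  "gl_orbit_rel n = {((A,B,C),(A',B',C')).
     \<exists>g h. g \<in> carrier_mat n n \<and> h \<in> carrier_mat n n \<and> g * h = 1\<^sub>m n \<and> h * g = 1\<^sub>m n \<and>
       A' = g * A * h \<and> B' = g * B \<and> C' = C * h}"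

text \<open>Number of F_q-points of sys^cc_n \<union> sys^co_n: number of GL_n(F_q)-orbits.\<close>
definition num_orbits :: "'a::{field,finite} itself \<Rightarrow> nat \<Rightarrow> nat" where
  "num_orbits _ n = card ((cc_or_co n :: ('a mat \<times> 'a mat \<times> 'a mat) set) // gl_orbit_rel n)"

end

theory Submission
  imports Defs "Jordan_Normal_Form.Determinant" "HOL-Computational_Algebra.Polynomial"
begin

text \<open>A completely controllable triple is conjugate to exactly one controllable canonical form
  \<open>(A\<^sub>p, e\<^sub>n, c)\<close>, where \<open>A\<^sub>p\<close> is multiplication by \<open>x\<close> on \<open>k[x]/(p)\<close> for a monic \<open>p\<close> of
  degree \<open>n\<close> and \<open>c\<close> is a polynomial of degree \<open>< n\<close>; this form is completely observable iff
  \<open>p\<close> and \<open>c\<close> are coprime. Transposition exchanges controllability and observability, so there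
  are \<open>q\<^sup>2\<^sup>n\<close> orbits of controllable triples plus one orbit of observable, non-controllable
  triples for each non-coprime pair \<open>(p, c)\<close>. Splitting off the monic gcd gives
  \<open>q\<^sup>2\<^sup>n = \<Sum>\<^sub>m q\<^sup>m r\<^sub>n\<^sub>-\<^sub>m\<close>, where \<open>r\<^sub>k\<close> counts coprime pairs of degree \<open>k\<close>; comparing with
  the same identity for \<open>n - 1\<close> shows that there are \<open>q \<cdot> q\<^sup>2\<^sup>n\<^sup>-\<^sup>2\<close> non-coprime pairs.\<close>

section \<open>Pairs of polynomials and their common factors\<close>

definition polys_deg_lt :: "nat \<Rightarrow> 'a::zero poly set" where
  "polys_deg_lt n = {c. \<forall>j\<ge>n. coeff c j = 0}"

definition monic_polys :: "nat \<Rightarrow> 'a::comm_ring_1 poly set" where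
  "monic_polys n = {p. lead_coeff p = 1 \<and> degree p = n}"

definition poly_pairs :: "nat \<Rightarrow> ('a::comm_ring_1 poly \<times> 'a poly) set" where
  "poly_pairs n = monic_polys n \<times> polys_deg_lt n"

definition coprime_pairs :: "nat \<Rightarrow> ('a::field poly \<times> 'a poly) set" where
  "coprime_pairs n = {(p, c) \<in> poly_pairs n. coprime p c}"

lemma polys_deg_lt_iff: "c \<in> polys_deg_lt n \<longleftrightarrow> c = 0 \<or> degree c < n"
proof
  assume "c \<in> polys_deg_lt n"
  then show "c = 0 \<or> degree c < n"
    unfolding polys_deg_lt_def using leading_coeff_0_iff[of c] by (auto simp: not_less)
qed (auto simp: polys_deg_lt_def intro: coeff_eq_0)

lemma polys_deg_lt_eq_Poly_image: "polys_deg_lt n = Poly ` {xs :: 'a::zero list. length xs = n}"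
proof (intro subset_antisym subsetI)
  fix c :: "'a poly" assume "c \<in> polys_deg_lt n"
  then have "c = Poly (map (coeff c) [0..<n])"
    by (intro poly_eqI) (auto simp: coeff_Poly_eq nth_default_def polys_deg_lt_def)
  then show "c \<in> Poly ` {xs. length xs = n}" by (rule image_eqI) simp
qed (auto simp: polys_deg_lt_def coeff_Poly_eq nth_default_def)

lemma inj_on_Poly_length: "inj_on Poly {xs :: 'a::zero list. length xs = n}"
proof (rule inj_onI)
  fix xs ys :: "'a list"
  assume "xs \<in> {xs. length xs = n}" "ys \<in> {xs. length xs = n}" and eq: "Poly xs = Poly ys"
  then have len: "length xs = length ys" by simp
  show "xs = ys"
  proof (rule nth_equalityI[OF len])
    fix i assume "i < length xs"
    then show "xs ! i = ys ! i"
      using arg_cong[OF eq, of "\<lambda>p. coeff p i"] len by (simp add: coeff_Poly_eq nth_default_nth)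
  qed
qed

lemma finite_polys_deg_lt: "finite (polys_deg_lt n :: 'a::{zero,finite} poly set)"
  unfolding polys_deg_lt_eq_Poly_image using finite_lists_length_eq[of "UNIV :: 'a set"] by simp

lemma card_polys_deg_lt: "card (polys_deg_lt n :: 'a::{zero,finite} poly set) = card (UNIV :: 'a set) ^ n"
proof -
  have "card (polys_deg_lt n :: 'a poly set) = card {xs :: 'a list. length xs = n}"
    unfolding polys_deg_lt_eq_Poly_image by (rule card_image[OF inj_on_Poly_length])
  also have "\<dots> = card (UNIV :: 'a set) ^ n" using card_lists_length_eq[of "UNIV :: 'a set"] by simp
  finally show ?thesis .
qed

lemma monic_polys_eq_image: "monic_polys n = (\<lambda>c. monom 1 n + c) ` (polys_deg_lt n :: 'a::comm_ring_1 poly set)"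
proof
  show "(\<lambda>c. monom 1 n + c) ` polys_deg_lt n \<subseteq> (monic_polys n :: 'a poly set)"
  proof
    fix p assume "p \<in> (\<lambda>c. monom 1 n + c) ` (polys_deg_lt n :: 'a poly set)"
    then obtain c where c: "c \<in> polys_deg_lt n" and p: "p = monom 1 n + c" by auto
    have "coeff p n = 1" using c p by (simp add: polys_deg_lt_def)
    moreover have "degree p \<le> n" using c p by (intro degree_le) (auto simp: polys_deg_lt_def coeff_monom)
    ultimately have "degree p = n" by (simp add: le_antisym le_degree)
    with \<open>coeff p n = 1\<close> show "p \<in> monic_polys n" by (simp add: monic_polys_def)
  qed
  show "monic_polys n \<subseteq> (\<lambda>c. monom 1 n + c) ` (polys_deg_lt n :: 'a poly set)"
  proof
    fix p :: "'a poly" assume p: "p \<in> monic_polys n"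
    have "p - monom 1 n \<in> polys_deg_lt n"
      using p by (auto simp: polys_deg_lt_def monic_polys_def coeff_monom intro: coeff_eq_0)
    then show "p \<in> (\<lambda>c. monom 1 n + c) ` polys_deg_lt n" by (intro image_eqI[of _ _ "p - monom 1 n"]) auto
  qed
qed

lemma finite_monic_polys: "finite (monic_polys n :: 'a::{comm_ring_1,finite} poly set)"
  unfolding monic_polys_eq_image using finite_polys_deg_lt by blast

lemma card_monic_polys: "card (monic_polys n :: 'a::{comm_ring_1,finite} poly set) = card (UNIV :: 'a set) ^ n"
  unfolding monic_polys_eq_image by (subst card_image) (auto intro: inj_onI simp: card_polys_deg_lt)

lemma finite_poly_pairs: "finite (poly_pairs n :: ('a::{comm_ring_1,finite} poly \<times> _) set)"
  unfolding poly_pairs_def using finite_monic_polys finite_polys_deg_lt by blast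

lemma card_poly_pairs: "card (poly_pairs n :: ('a::{comm_ring_1,finite} poly \<times> _) set) = card (UNIV :: 'a set) ^ (2 * n)"
  by (simp add: poly_pairs_def card_cartesian_product card_monic_polys card_polys_deg_lt power_add mult_2)

lemma poly_bezout:
  fixes p c :: "'a::field poly"
  shows "\<exists>d u v. d dvd p \<and> d dvd c \<and> d = u * p + v * c"
proof (induction c arbitrary: p rule: measure_induct_rule[where f = "\<lambda>c. if c = 0 then 0 else Suc (degree c)"])
  case (less c)
  show ?case
  proof (cases "c = 0")
    case True
    then show ?thesis by (intro exI[of _ p] exI[of _ 1] exI[of _ 0]) auto
  next
    case False
    then have "(if p mod c = 0 then 0 else Suc (degree (p mod c))) < Suc (degree c)"
      using degree_mod_less[of c p] by auto
    with less[of "p mod c" c] False obtain d u v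
      where d: "d dvd c" "d dvd p mod c" "d = u * c + v * (p mod c)" by auto
    have "d dvd p" using d(1,2) by (simp add: dvd_mod_iff)
    moreover have "d = v * p + (u - v * (p div c)) * c"
      using d(3) by (simp add: minus_div_mult_eq_mod[symmetric] algebra_simps)
    ultimately show ?thesis using d(1) by blast
  qed
qed

lemma coprime_poly_bezout:
  fixes p c :: "'a::field poly"
  assumes "coprime p c"
  obtains u v where "u * p + v * c = 1"
proof -
  obtain d u v where d: "d dvd p" "d dvd c" "d = u * p + v * c" using poly_bezout by blast
  then have "is_unit d" using assms by (simp add: coprime_common_divisor)
  then obtain k where "1 = d * k" by (auto elim: dvdE)
  then have "(u * k) * p + (v * k) * c = 1" using d(3) by (simp add: algebra_simps)
  then show ?thesis by (rule that)
qed

lemma monic_degree_0: "lead_coeff p = 1 \<Longrightarrow> degree p = 0 \<Longrightarrow> p = (1 :: 'a::comm_ring_1 poly)"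
  by (elim degree_eq_zeroE) (simp add: one_pCons)

lemma monic_dvd_antisym:
  fixes a b :: "'a::idom poly"
  assumes "lead_coeff a = 1" "lead_coeff b = 1" "a dvd b" "b dvd a"
  shows "a = b"
proof -
  obtain k where k: "b = a * k" using assms(3) by (auto elim: dvdE)
  have "a \<noteq> 0" "b \<noteq> 0" using assms(1,2) by auto
  then have "degree a = degree b" using assms(3,4) dvd_imp_degree_le by (meson le_antisym)
  then have "degree k = 0" using k \<open>b \<noteq> 0\<close> by (auto simp: degree_mult_eq)
  moreover have "lead_coeff k = 1" using k assms(1,2) by (simp add: lead_coeff_mult)
  ultimately have "k = 1" by (rule monic_degree_0[rotated])
  then show ?thesis using k by simp
qed

lemma coprime_factorization_exists:
  fixes p c :: "'a::field poly"
  assumes "p \<noteq> 0"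
  obtains d p' c' where "lead_coeff d = 1" "p = d * p'" "c = d * c'" "coprime p' c'"
proof -
  obtain d0 u v where d0: "d0 dvd p" "d0 dvd c" and d0_comb: "d0 = u * p + v * c"
    using poly_bezout by blast
  define d where "d = smult (inverse (lead_coeff d0)) d0"
  have "d0 \<noteq> 0" using d0(1) assms by auto
  then have monic: "lead_coeff d = 1" and "d dvd p" "d dvd c"
    using d0 by (simp_all add: d_def smult_dvd_iff)
  have d_comb: "d = smult (inverse (lead_coeff d0)) u * p + smult (inverse (lead_coeff d0)) v * c"
    unfolding d_def d0_comb by (simp add: smult_add_right)
  obtain p' c' where p': "p = d * p'" and c': "c = d * c'"
    using \<open>d dvd p\<close> \<open>d dvd c\<close> by (elim dvdE)
  have "coprime p' c'"
  proof (rule coprimeI)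
    fix e assume "e dvd p'" "e dvd c'"
    then have "d * e dvd p" "d * e dvd c" using p' c' by (simp_all add: mult_dvd_mono)
    then have "d * e dvd d * 1" unfolding mult_1_right by (subst d_comb) (intro dvd_add dvd_mult)
    then show "is_unit e" using monic by (subst (asm) dvd_mult_cancel_left) auto
  qed
  with monic p' c' show ?thesis by (rule that)
qed

lemma coprime_factorization_unique:
  fixes d e p c p' c' :: "'a::field poly"
  assumes "lead_coeff d = 1" "lead_coeff e = 1" "coprime p c" "coprime p' c'"
    and "d * p = e * p'" "d * c = e * c'"
  shows "d = e"
proof -
  have "a dvd b" if "coprime q r" "b * q = a * q'" "b * r = a * r'" for a b q r q' r' :: "'a poly"
  proof -
    obtain u v where "u * q + v * r = 1" using coprime_poly_bezout[OF \<open>coprime q r\<close>] .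
    then have "b = u * (b * q) + v * (b * r)" by (metis distrib_left mult.left_commute mult_1_right)
    also have "\<dots> = a * (u * q' + v * r')" using that(2,3) by (simp add: algebra_simps)
    finally show "a dvd b" by simp
  qed
  then show ?thesis using assms by (metis monic_dvd_antisym)
qed

lemma mult_mem_poly_pairs_iff:
  fixes d p c :: "'a::idom poly"
  assumes monic: "lead_coeff d = 1"
  shows "(d * p, d * c) \<in> poly_pairs n \<longleftrightarrow> degree d \<le> n \<and> (p, c) \<in> poly_pairs (n - degree d)"
proof (cases "p = 0")
  case True
  then show ?thesis by (simp add: poly_pairs_def monic_polys_def)
next
  case False
  have "d \<noteq> 0" using monic by auto
  have lead: "lead_coeff (d * p) = lead_coeff p" by (simp add: lead_coeff_mult monic)
  have deg: "degree (d * p) = degree d + degree p" using \<open>d \<noteq> 0\<close> False by (rule degree_mult_eq)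
  have dc: "d * c \<in> polys_deg_lt (degree d + k) \<longleftrightarrow> c \<in> polys_deg_lt k" for k
    using \<open>d \<noteq> 0\<close> by (cases "c = 0") (auto simp: polys_deg_lt_iff degree_mult_eq)
  show ?thesis
  proof
    assume "(d * p, d * c) \<in> poly_pairs n"
    then have "lead_coeff (d * p) = 1" "degree (d * p) = n" "d * c \<in> polys_deg_lt n"
      by (auto simp: poly_pairs_def monic_polys_def)
    then have "degree d + degree p = n" "lead_coeff p = 1" "d * c \<in> polys_deg_lt n"
      using lead deg by simp_all
    then show "degree d \<le> n \<and> (p, c) \<in> poly_pairs (n - degree d)"
      using dc[of "n - degree d"] by (auto simp: poly_pairs_def monic_polys_def)
  next
    assume "degree d \<le> n \<and> (p, c) \<in> poly_pairs (n - degree d)"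
    then have "degree d + degree p = n" "lead_coeff p = 1" "c \<in> polys_deg_lt (n - degree d)"
      by (auto simp: poly_pairs_def monic_polys_def)
    moreover have "lead_coeff (d * p) = 1" using lead \<open>lead_coeff p = 1\<close> by simp
    ultimately show "(d * p, d * c) \<in> poly_pairs n"
      using dc[of "n - degree d"] by (auto simp: poly_pairs_def monic_polys_def deg)
  qed
qed

lemma bij_betw_split_common_factor:
  "bij_betw (\<lambda>(m, d, p, c). (d * p, d * c))
     (SIGMA m:{..n}. monic_polys m \<times> coprime_pairs (n - m)) (poly_pairs n :: ('a::field poly \<times> _) set)"
  (is "bij_betw ?f ?S _")
proof (rule bij_betw_imageI)
  show "inj_on ?f ?S"
  proof (rule inj_onI)
    fix x y assume x: "x \<in> ?S" and y: "y \<in> ?S" and xy: "?f x = ?f y"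
    obtain m d p c m' d' p' c' where xx: "x = (m, d, p, c)" and yy: "y = (m', d', p', c')"
      by (cases x, cases y) auto
    have eq: "d * p = d' * p'" "d * c = d' * c'" using xy xx yy by simp_all
    have "d = d'" "m = degree d" "m' = degree d'"
      using x y xx yy coprime_factorization_unique[OF _ _ _ _ eq]
      by (auto simp: monic_polys_def coprime_pairs_def)
    moreover have "d \<noteq> 0" using x xx by (auto simp: monic_polys_def)
    ultimately show "x = y" using eq xx yy by simp
  qed
  show "?f ` ?S = poly_pairs n"
  proof (intro subset_antisym subsetI)
    fix x assume "x \<in> ?f ` ?S"
    then show "x \<in> poly_pairs n"
      by (auto simp: mult_mem_poly_pairs_iff monic_polys_def coprime_pairs_def)
  next
    fix x :: "'a poly \<times> 'a poly" assume x: "x \<in> poly_pairs n"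
    obtain P C where PC: "x = (P, C)" by fastforce
    then have "P \<noteq> 0" using x by (auto simp: poly_pairs_def monic_polys_def)
    then obtain d p c :: "'a poly" where d: "lead_coeff d = 1" "P = d * p" "C = d * c" "coprime p c"
      by (rule coprime_factorization_exists)
    then have "degree d \<le> n" "(p, c) \<in> poly_pairs (n - degree d)"
      using x PC mult_mem_poly_pairs_iff[of d p c n] by auto
    with d have "(degree d, d, p, c) \<in> ?S" by (simp add: monic_polys_def coprime_pairs_def)
    moreover have "x = ?f (degree d, d, p, c)" using PC d by simp
    ultimately show "x \<in> ?f ` ?S" by (rule rev_image_eqI)
  qed
qed

lemma card_poly_pairs_split:
  "card (poly_pairs n :: ('a::{field,finite} poly \<times> _) set)
     = (\<Sum>m\<le>n. card (UNIV :: 'a set) ^ m * card (coprime_pairs (n - m) :: ('a poly \<times> _) set))"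
proof -
  have "finite (coprime_pairs k :: ('a poly \<times> _) set)" for k
    by (rule finite_subset[OF _ finite_poly_pairs]) (auto simp: coprime_pairs_def)
  then show ?thesis
    using bij_betw_same_card[OF bij_betw_split_common_factor[of n, where 'a = 'a]]
    by (simp add: card_SigmaI finite_monic_polys card_cartesian_product card_monic_polys)
qed

lemma card_coprime_pairs_Suc:
  "card (coprime_pairs (Suc k) :: ('a::{field,finite} poly \<times> _) set) + card (UNIV :: 'a set) ^ (2 * k + 1)
     = card (UNIV :: 'a set) ^ (2 * k + 2)"
proof -
  let ?q = "card (UNIV :: 'a set)"
  let ?r = "\<lambda>k. card (coprime_pairs k :: ('a poly \<times> _) set)"
  have "?q ^ (2 * k + 2) = ?r (Suc k) + (\<Sum>m\<le>k. ?q ^ Suc m * ?r (k - m))"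
    using card_poly_pairs_split[of "Suc k", where 'a = 'a]
    by (simp add: card_poly_pairs sum.atMost_Suc_shift del: sum.atMost_Suc)
  also have "(\<Sum>m\<le>k. ?q ^ Suc m * ?r (k - m)) = ?q ^ (2 * k + 1)"
    using card_poly_pairs_split[of k, where 'a = 'a]
    by (simp add: card_poly_pairs sum_distrib_left mult.assoc)
  finally show ?thesis by simp
qed

lemma card_non_coprime_pairs:
  "card (poly_pairs n - coprime_pairs n :: ('a::{field,finite} poly \<times> _) set)
     = (if n = 0 then 0 else card (UNIV :: 'a set) ^ (2 * n - 1))"
proof (cases n)
  case 0
  then have "poly_pairs n \<subseteq> (coprime_pairs n :: ('a poly \<times> _) set)"
    by (auto simp: poly_pairs_def coprime_pairs_def monic_polys_def dest: monic_degree_0)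
  then show ?thesis using 0 by (simp add: Diff_eq_empty_iff[THEN iffD2])
next
  case (Suc k)
  have "coprime_pairs n \<subseteq> (poly_pairs n :: ('a poly \<times> _) set)" by (auto simp: coprime_pairs_def)
  then have "card (poly_pairs n - coprime_pairs n :: ('a poly \<times> _) set)
      = card (poly_pairs n :: ('a poly \<times> _) set) - card (coprime_pairs n :: ('a poly \<times> _) set)"
    by (meson card_Diff_subset finite_poly_pairs finite_subset)
  then show ?thesis
    using card_coprime_pairs_Suc[of k, where 'a = 'a] Suc by (simp add: card_poly_pairs)
qed

section \<open>Matrices of multiplication modulo a polynomial\<close>

lemma invertible_mat_inverse:
  assumes A: "(A :: 'a::field mat) \<in> carrier_mat n n" and "invertible_mat A"
  obtains A' where "A' \<in> carrier_mat n n" "A * A' = 1\<^sub>m n" "A' * A = 1\<^sub>m n"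
proof -
  obtain B where AB: "A * B = 1\<^sub>m (dim_row A)" and BA: "B * A = 1\<^sub>m (dim_row B)"
    using assms(2) unfolding invertible_mat_def inverts_mat_def by blast
  have "dim_col B = n" using arg_cong[OF AB, of dim_col] A by simp
  moreover have "dim_row B = n" using arg_cong[OF BA, of dim_col] A by simp
  ultimately show ?thesis using AB BA A by (intro that[of B]) auto
qed

lemma mult_left_inverse:
  assumes "L \<in> carrier_mat n n" "K \<in> carrier_mat n n" "L * K = 1\<^sub>m n" "X \<in> carrier_mat n m"
  shows "L * (K * X) = (X :: 'a::semiring_1 mat)"
  using assms by (simp add: assoc_mult_mat[symmetric, of L n n K n X m])

lemma invertible_mat_iff_det:
  assumes A: "(A :: 'a::field mat) \<in> carrier_mat n n"
  shows "invertible_mat A \<longleftrightarrow> det A \<noteq> 0"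
proof
  assume "invertible_mat A"
  then obtain B where B: "B \<in> carrier_mat n n" and "A * B = 1\<^sub>m n"
    by (rule invertible_mat_inverse[OF A])
  then have "det A * det B = 1" using det_mult[OF A B] by simp
  then show "det A \<noteq> 0" by auto
next
  assume "det A \<noteq> 0"
  from det_non_zero_imp_unit[OF A this, of "()"]
  obtain B where "B \<in> carrier_mat n n" "B * A = 1\<^sub>m n" "A * B = 1\<^sub>m n"
    unfolding Units_def ring_mat_def by auto
  then show "invertible_mat A"
    using A unfolding invertible_mat_def inverts_mat_def square_mat.simps by auto
qed

lemma invertible_mat_mult_left_cancel:
  assumes "(A :: 'a::field mat) \<in> carrier_mat n n" "invertible_mat A"
    and "X \<in> carrier_mat n m" "Y \<in> carrier_mat n m" "A * X = A * Y"
  shows "X = Y"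
proof -
  obtain A' where A': "A' \<in> carrier_mat n n" "A' * A = 1\<^sub>m n"
    by (rule invertible_mat_inverse[OF assms(1,2)])
  have "X = A' * (A * X)" using A' assms(1,3) by (simp add: assoc_mult_mat[symmetric, of _ n n _ n _ m])
  also have "\<dots> = A' * (A * Y)" using assms(5) by simp
  also have "\<dots> = Y" using A' assms(1,4) by (simp add: assoc_mult_mat[symmetric, of _ n n _ n _ m])
  finally show ?thesis .
qed

definition poly_of_coeffs :: "nat \<Rightarrow> (nat \<Rightarrow> 'a::zero) \<Rightarrow> 'a poly" where
  "poly_of_coeffs n f = Poly (map f [0..<n])"

definition coeff_row :: "nat \<Rightarrow> 'a::zero poly \<Rightarrow> 'a mat" where
  "coeff_row n c = mat 1 n (\<lambda>(_, j). coeff c j)"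

definition coeff_col :: "nat \<Rightarrow> 'a::zero poly \<Rightarrow> 'a mat" where
  "coeff_col n c = mat n 1 (\<lambda>(i, _). coeff c i)"

definition unit_col :: "nat \<Rightarrow> nat \<Rightarrow> 'a::zero_neq_one mat" where
  "unit_col n k = mat n 1 (\<lambda>(i, _). if i = k then 1 else 0)"

text \<open>The matrix of multiplication by \<open>f\<close> on \<open>k[x]/(p)\<close> in the basis \<open>1, x, \<dots>, x^(n-1)\<close>,
  acting on coefficient rows: row \<open>i\<close> holds the coefficients of \<open>x^i f mod p\<close>.\<close>

definition mult_mod_mat :: "nat \<Rightarrow> 'a::field poly \<Rightarrow> 'a poly \<Rightarrow> 'a mat" where
  "mult_mod_mat n p f = mat n n (\<lambda>(i, j). coeff (monom 1 i * f mod p) j)"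

lemma coeff_poly_of_coeffs: "coeff (poly_of_coeffs n f) i = (if i < n then f i else 0)"
  by (simp add: poly_of_coeffs_def coeff_Poly_eq nth_default_def)

lemma poly_of_coeffs_mem: "poly_of_coeffs n f \<in> polys_deg_lt n"
  by (simp add: polys_deg_lt_def coeff_poly_of_coeffs)

lemma coeff_row_carrier [simp]: "coeff_row n c \<in> carrier_mat 1 n"
  and coeff_col_carrier [simp]: "coeff_col n c \<in> carrier_mat n 1"
  and unit_col_carrier [simp]: "unit_col n k \<in> carrier_mat n 1"
  and mult_mod_mat_carrier [simp]: "mult_mod_mat n p f \<in> carrier_mat n n"
  by (simp_all add: coeff_row_def coeff_col_def unit_col_def mult_mod_mat_def)

lemma dim_mult_mod_mat [simp]:
  "dim_row (mult_mod_mat n p f) = n" "dim_col (mult_mod_mat n p f) = n"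
  and dim_unit_col [simp]: "dim_row (unit_col n k) = n" "dim_col (unit_col n k) = 1"
  by (simp_all add: mult_mod_mat_def unit_col_def)

lemma coeff_row_eq_iff:
  assumes "c \<in> polys_deg_lt n" "c' \<in> polys_deg_lt n"
  shows "coeff_row n c = coeff_row n c' \<longleftrightarrow> c = c'"
proof
  assume eq: "coeff_row n c = coeff_row n c'"
  show "c = c'"
  proof (rule poly_eqI)
    fix j show "coeff c j = coeff c' j"
      using assms arg_cong[OF eq, of "\<lambda>M. M $$ (0, j)"]
      by (cases "j < n") (auto simp: coeff_row_def polys_deg_lt_def)
  qed
qed simp

lemma coeff_col_eq_iff:
  assumes "c \<in> polys_deg_lt n" "c' \<in> polys_deg_lt n"
  shows "coeff_col n c = coeff_col n c' \<longleftrightarrow> c = c'"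
proof
  assume eq: "coeff_col n c = coeff_col n c'"
  show "c = c'"
  proof (rule poly_eqI)
    fix i show "coeff c i = coeff c' i"
      using assms arg_cong[OF eq, of "\<lambda>M. M $$ (i, 0)"]
      by (cases "i < n") (auto simp: coeff_col_def polys_deg_lt_def)
  qed
qed simp

lemma coeff_row_poly_of_coeffs: "R \<in> carrier_mat 1 n \<Longrightarrow> coeff_row n (poly_of_coeffs n (\<lambda>j. R $$ (0, j))) = R"
  by (intro eq_matI) (auto simp: coeff_row_def coeff_poly_of_coeffs)

lemma coeff_col_poly_of_coeffs: "M \<in> carrier_mat n 1 \<Longrightarrow> coeff_col n (poly_of_coeffs n (\<lambda>i. M $$ (i, 0))) = M"
  by (intro eq_matI) (auto simp: coeff_col_def coeff_poly_of_coeffs)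

lemma mult_unit_col_index:
  assumes "(A :: 'a::semiring_1 mat) \<in> carrier_mat m n" "i < m" "k < n"
  shows "(A * unit_col n k) $$ (i, 0) = A $$ (i, k)"
  using assms by (simp add: unit_col_def scalar_prod_def if_distrib cong: if_cong)

lemma mod_mem_polys_deg_lt: "p \<in> monic_polys n \<Longrightarrow> f mod p \<in> polys_deg_lt n"
  using degree_mod_less[of p f] by (fastforce simp: polys_deg_lt_iff monic_polys_def)

lemma mod_polys_deg_lt: "p \<in> monic_polys n \<Longrightarrow> r \<in> polys_deg_lt n \<Longrightarrow> r mod p = r"
  by (cases "r = 0") (auto simp: polys_deg_lt_iff monic_polys_def intro: mod_poly_less)

lemma sum_mod_poly: "(\<Sum>j\<in>A. g j) mod (p :: 'a::field poly) = (\<Sum>j\<in>A. g j mod p)"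
  by (induction A rule: infinite_finite_induct) (simp_all add: poly_mod_add_left)

lemma coeff_mult_mod_eq_sum:
  fixes s f p :: "'a::field poly"
  assumes "s \<in> polys_deg_lt n"
  shows "coeff (s * f mod p) m = (\<Sum>j = 0..<n. coeff s j * coeff (monom 1 j * f mod p) m)"
proof -
  define S where "S = (\<Sum>j = 0..<n. monom (coeff s j) j)"
  have "s = S"
    using assms unfolding S_def by (intro poly_eqI) (auto simp: coeff_sum polys_deg_lt_def)
  have "S * f mod p = (\<Sum>j = 0..<n. monom (coeff s j) j * f mod p)"
    unfolding S_def sum_distrib_right sum_mod_poly ..
  also have "\<dots> = (\<Sum>j = 0..<n. smult (coeff s j) (monom 1 j * f mod p))"
  proof (intro sum.cong refl)
    fix j
    have "monom (coeff s j) j = smult (coeff s j) (monom 1 j)" by (simp add: smult_monom)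
    then show "monom (coeff s j) j * f mod p = smult (coeff s j) (monom 1 j * f mod p)"
      by (simp only: mult_smult_left mod_smult_left)
  qed
  finally show ?thesis using \<open>s = S\<close> by (simp add: coeff_sum)
qed

lemma coeff_row_mult_mod_mat:
  assumes "c \<in> polys_deg_lt n"
  shows "coeff_row n c * mult_mod_mat n p f = coeff_row n (c * f mod p)"
  using assms
  by (intro eq_matI) (auto simp: coeff_row_def mult_mod_mat_def scalar_prod_def coeff_mult_mod_eq_sum)

lemma mult_mod_mat_mult:
  assumes "p \<in> monic_polys n"
  shows "mult_mod_mat n p f * mult_mod_mat n p g = mult_mod_mat n p (f * g)"
proof (rule eq_matI)
  fix i j assume "i < dim_row (mult_mod_mat n p (f * g))" "j < dim_col (mult_mod_mat n p (f * g))"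
  then have ij: "i < n" "j < n" by (simp_all add: mult_mod_mat_def)
  have "(mult_mod_mat n p f * mult_mod_mat n p g) $$ (i, j)
      = (\<Sum>k = 0..<n. coeff (monom 1 i * f mod p) k * coeff (monom 1 k * g mod p) j)"
    using ij by (simp add: mult_mod_mat_def scalar_prod_def)
  also have "\<dots> = coeff ((monom 1 i * f mod p) * g mod p) j"
    by (rule coeff_mult_mod_eq_sum[symmetric, OF mod_mem_polys_deg_lt[OF assms]])
  also have "\<dots> = mult_mod_mat n p (f * g) $$ (i, j)"
    using ij by (simp add: mult_mod_mat_def mod_mult_left_eq mult.assoc)
  finally show "(mult_mod_mat n p f * mult_mod_mat n p g) $$ (i, j) = mult_mod_mat n p (f * g) $$ (i, j)" .
qed (simp_all add: mult_mod_mat_def)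

lemma mult_mod_mat_one:
  assumes "p \<in> monic_polys n"
  shows "mult_mod_mat n p 1 = 1\<^sub>m n"
proof (rule eq_matI)
  fix i j assume "i < dim_row (1\<^sub>m n :: 'a mat)" "j < dim_col (1\<^sub>m n :: 'a mat)"
  then have "i < n" "j < n" by simp_all
  moreover have "monom 1 i mod p = (monom 1 i :: 'a poly)"
    using \<open>i < n\<close> by (intro mod_polys_deg_lt[OF assms]) (simp add: polys_deg_lt_iff degree_monom_eq)
  ultimately show "mult_mod_mat n p 1 $$ (i, j) = 1\<^sub>m n $$ (i, j)"
    by (simp add: mult_mod_mat_def coeff_monom)
qed (simp_all add: mult_mod_mat_def)

lemma mult_mod_mat_cong:
  assumes "f mod p = g mod p"
  shows "mult_mod_mat n p f = mult_mod_mat n p g"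
proof -
  have "monom 1 i * f mod p = monom 1 i * g mod p" for i
    using mod_mult_right_eq[of "monom 1 i" f p] mod_mult_right_eq[of "monom 1 i" g p] assms by simp
  then show ?thesis by (simp add: mult_mod_mat_def)
qed

lemma mult_mod_mat_x_pow:
  assumes "p \<in> monic_polys n"
  shows "mult_mod_mat n p (monom 1 1) ^\<^sub>m k = mult_mod_mat n p (monom 1 k)"
proof (induction k)
  case 0
  then show ?case using mult_mod_mat_one[OF assms] by simp
next
  case (Suc k)
  then show ?case by (simp add: mult_mod_mat_mult[OF assms] mult_monom)
qed

lemma not_coprime_zero_divisor:
  fixes p c :: "'a::field poly"
  assumes p: "p \<in> monic_polys n" and "\<not> coprime p c"
  obtains f where "f \<in> polys_deg_lt n" "f \<noteq> 0" "f * c mod p = 0"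
proof -
  have "p \<noteq> 0" using p by (auto simp: monic_polys_def)
  then obtain d p' c' where d: "lead_coeff d = 1" "p = d * p'" "c = d * c'" "coprime p' c'"
    by (rule coprime_factorization_exists)
  have "degree d \<noteq> 0"
    using d \<open>\<not> coprime p c\<close> monic_degree_0 by fastforce
  then have "p' \<in> polys_deg_lt n" "p' \<noteq> 0"
    using d p \<open>p \<noteq> 0\<close> by (auto simp: polys_deg_lt_iff monic_polys_def degree_mult_eq)
  moreover have "p' * c mod p = 0" using d by (simp add: mult.left_commute)
  ultimately show ?thesis by (rule that)
qed

lemma invertible_mult_mod_mat_iff:
  assumes p: "p \<in> monic_polys n"
  shows "invertible_mat (mult_mod_mat n p c) \<longleftrightarrow> coprime p c"
proof
  assume cop: "coprime p c"
  obtain u v where "u * p + v * c = 1" using coprime_poly_bezout[OF cop] .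
  then have "c * v = 1 + (- u) * p" by (simp add: algebra_simps)
  then have "(c * v) mod p = 1 mod p" by (simp only: mod_mult_self1)
  then have "mult_mod_mat n p c * mult_mod_mat n p v = 1\<^sub>m n"
    "mult_mod_mat n p v * mult_mod_mat n p c = 1\<^sub>m n"
    by (simp_all add: mult_mod_mat_mult[OF p] mult_mod_mat_one[OF p] mult.commute[of v]
        mult_mod_mat_cong[of _ p 1])
  then show "invertible_mat (mult_mod_mat n p c)"
    unfolding invertible_mat_def inverts_mat_def by (auto simp: mult_mod_mat_def)
next
  assume inv: "invertible_mat (mult_mod_mat n p c)"
  show "coprime p c"
  proof (rule ccontr)
    assume "\<not> coprime p c"
    then obtain f where f: "f \<in> polys_deg_lt n" "f \<noteq> 0" "f * c mod p = 0"
      by (rule not_coprime_zero_divisor[OF p])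
    obtain N where N: "N \<in> carrier_mat n n" "mult_mod_mat n p c * N = 1\<^sub>m n"
      by (rule invertible_mat_inverse[OF mult_mod_mat_carrier inv])
    have "coeff_row n f = coeff_row n f * (mult_mod_mat n p c * N)"
      unfolding N(2) by (rule right_mult_one_mat[symmetric, OF coeff_row_carrier])
    also have "\<dots> = (coeff_row n f * mult_mod_mat n p c) * N"
      by (rule assoc_mult_mat[OF coeff_row_carrier mult_mod_mat_carrier N(1), symmetric])
    also have "coeff_row n f * mult_mod_mat n p c = coeff_row n 0"
      using f by (simp add: coeff_row_mult_mod_mat)
    also have "coeff_row n 0 * N = coeff_row n 0"
      using N by (intro eq_matI) (auto simp: coeff_row_def scalar_prod_def)
    finally have "f = 0"
      using coeff_row_eq_iff[OF \<open>f \<in> polys_deg_lt n\<close>, of 0] by (simp add: polys_deg_lt_def)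
    with \<open>f \<noteq> 0\<close> show False ..
  qed
qed

section \<open>The canonical systems\<close>

definition canonical_system :: "nat \<Rightarrow> 'a::field poly \<times> 'a poly \<Rightarrow> 'a mat \<times> 'a mat \<times> 'a mat" where
  "canonical_system n = (\<lambda>(p, c). (mult_mod_mat n p (monom 1 1), unit_col n (n - 1), coeff_row n c))"

lemma canonical_system_triples: "canonical_system n y \<in> triples n"
  by (cases y) (simp add: canonical_system_def triples_def del: One_nat_def)

lemma ctrb_mat_canonical_index:
  assumes p: "p \<in> monic_polys n" and "i < n" "j < n"
  shows "ctrb_mat n (mult_mod_mat n p (monom 1 1)) (unit_col n (n - 1)) $$ (i, j)
    = coeff (monom 1 i * monom 1 j mod p) (n - 1)"
proof -
  have "ctrb_mat n (mult_mod_mat n p (monom 1 1)) (unit_col n (n - 1)) $$ (i, j)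
      = (mult_mod_mat n p (monom 1 1) ^\<^sub>m j * unit_col n (n - 1)) $$ (i, 0)"
    using assms by (simp add: ctrb_mat_def)
  also have "\<dots> = mult_mod_mat n p (monom 1 j) $$ (i, n - 1)"
    unfolding mult_mod_mat_x_pow[OF p] using assms by (intro mult_unit_col_index) auto
  also have "\<dots> = coeff (monom 1 i * monom 1 j mod p) (n - 1)"
    using assms by (simp add: mult_mod_mat_def)
  finally show ?thesis .
qed

lemma ctrb_mat_canonical_mult_vec_index:
  assumes p: "p \<in> monic_polys n" and v: "v \<in> carrier_vec n" and "i < n"
  shows "(ctrb_mat n (mult_mod_mat n p (monom 1 1)) (unit_col n (n - 1)) *\<^sub>v v) $ i
    = coeff (poly_of_coeffs n (\<lambda>j. v $ j) * monom 1 i mod p) (n - 1)"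
    (is "(?K *\<^sub>v v) $ i = coeff (?f * _ mod p) _")
proof -
  have "(?K *\<^sub>v v) $ i = (\<Sum>j = 0..<n. ?K $$ (i, j) * v $ j)"
    using \<open>i < n\<close> v by (simp add: scalar_prod_def ctrb_mat_def)
  also have "\<dots> = (\<Sum>j = 0..<n. coeff ?f j * coeff (monom 1 j * monom 1 i mod p) (n - 1))"
  proof (intro sum.cong refl)
    fix j assume "j \<in> {0..<n}"
    then show "?K $$ (i, j) * v $ j = coeff ?f j * coeff (monom 1 j * monom 1 i mod p) (n - 1)"
      using ctrb_mat_canonical_index[OF p \<open>i < n\<close>, of j] by (simp add: coeff_poly_of_coeffs mult.commute)
  qed
  also have "\<dots> = coeff (?f * monom 1 i mod p) (n - 1)"
    by (rule coeff_mult_mod_eq_sum[OF poly_of_coeffs_mem, symmetric])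
  finally show ?thesis .
qed

lemma poly_of_coeffs_vec_eq_0:
  assumes "v \<in> carrier_vec n" "poly_of_coeffs n (\<lambda>j. v $ j) = 0"
  shows "v = 0\<^sub>v n"
proof (rule eq_vecI)
  fix j assume "j < dim_vec (0\<^sub>v n :: 'a vec)"
  then show "v $ j = 0\<^sub>v n $ j"
    using arg_cong[OF assms(2), of "\<lambda>f. coeff f j"] by (simp add: coeff_poly_of_coeffs)
qed (use assms(1) in simp)

lemma invertible_ctrb_mat_canonical:
  assumes p: "p \<in> monic_polys n"
  shows "invertible_mat (ctrb_mat n (mult_mod_mat n p (monom 1 1)) (unit_col n (n - 1)))"
    (is "invertible_mat ?K")
proof -
  have K: "?K \<in> carrier_mat n n" by (simp add: ctrb_mat_def)
  have "v = 0\<^sub>v n" if v: "v \<in> carrier_vec n" and Kv: "?K *\<^sub>v v = 0\<^sub>v n" for v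
  proof (rule ccontr)
    assume "v \<noteq> 0\<^sub>v n"
    define f where "f = poly_of_coeffs n (\<lambda>j. v $ j)"
    have "f \<noteq> 0" using poly_of_coeffs_vec_eq_0[OF v] \<open>v \<noteq> 0\<^sub>v n\<close> by (auto simp: f_def)
    moreover have "f \<in> polys_deg_lt n" unfolding f_def by (rule poly_of_coeffs_mem)
    ultimately have deg: "degree f < n" by (simp add: polys_deg_lt_iff)
    text \<open>Shift \<open>f\<close> so that its leading coefficient lands in position \<open>n - 1\<close>.\<close>
    define i where "i = n - 1 - degree f"
    have "i < n" using deg by (simp add: i_def)
    have "f * monom 1 i \<in> polys_deg_lt n"
      using \<open>f \<noteq> 0\<close> deg by (simp add: polys_deg_lt_iff degree_mult_eq degree_monom_eq i_def)
    have "(?K *\<^sub>v v) $ i = coeff (f * monom 1 i mod p) (n - 1)"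
      unfolding f_def by (rule ctrb_mat_canonical_mult_vec_index[OF p v \<open>i < n\<close>])
    also have "f * monom 1 i mod p = f * monom 1 i"
      by (rule mod_polys_deg_lt[OF p \<open>f * monom 1 i \<in> _\<close>])
    also have "coeff (f * monom 1 i) (n - 1) = coeff f (degree f)"
      using deg by (simp add: mult.commute[of f] coeff_monom_mult i_def)
    finally show False using Kv \<open>i < n\<close> \<open>f \<noteq> 0\<close> by simp
  qed
  then show ?thesis
    unfolding invertible_mat_iff_det[OF K] det_0_iff_vec_prod_zero_field[OF K] by blast
qed

lemma x_pow_minus_monic_mem: "p \<in> monic_polys n \<Longrightarrow> monom 1 n - p \<in> polys_deg_lt n"
  by (auto simp: polys_deg_lt_def monic_polys_def coeff_monom intro: coeff_eq_0 elim: le_neq_implies_less)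

text \<open>Since \<open>x^n \<equiv> x^n - p (mod p)\<close>, the coordinates of \<open>A^n B\<close> in the basis \<open>A^j B\<close> are the
  coefficients of \<open>x^n - p\<close>.\<close>

lemma canonical_pow_mult_unit_col:
  assumes p: "p \<in> monic_polys n"
  shows "mult_mod_mat n p (monom 1 1) ^\<^sub>m n * unit_col n (n - 1)
    = ctrb_mat n (mult_mod_mat n p (monom 1 1)) (unit_col n (n - 1)) * coeff_col n (monom 1 n - p)"
proof (rule eq_matI)
  fix i j assume "i < dim_row (ctrb_mat n (mult_mod_mat n p (monom 1 1)) (unit_col n (n - 1)) * coeff_col n (monom 1 n - p))"
    "j < dim_col (ctrb_mat n (mult_mod_mat n p (monom 1 1)) (unit_col n (n - 1)) * coeff_col n (monom 1 n - p))"
  then have i: "i < n" and j: "j = 0" by (simp_all add: ctrb_mat_def coeff_col_def)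
  have "(monom 1 n - p) * monom 1 i mod p = monom 1 i * monom 1 n mod p"
  proof -
    have "(monom 1 n - p) * monom 1 i = monom 1 i * monom 1 n + (- monom 1 i) * p"
      by (simp add: algebra_simps)
    then show ?thesis by (simp only: mod_mult_self1)
  qed
  let ?K = "ctrb_mat n (mult_mod_mat n p (monom 1 1)) (unit_col n (n - 1))"
  have "(?K * coeff_col n (monom 1 n - p)) $$ (i, j) = (\<Sum>k = 0..<n. ?K $$ (i, k) * coeff (monom 1 n - p) k)"
    unfolding j using i by (simp add: scalar_prod_def coeff_col_def ctrb_mat_def)
  also have "\<dots> = (\<Sum>k = 0..<n. coeff (monom 1 n - p) k * coeff (monom 1 k * monom 1 i mod p) (n - 1))"
  proof (intro sum.cong refl)
    fix k assume "k \<in> {0..<n}"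
    then show "?K $$ (i, k) * coeff (monom 1 n - p) k = coeff (monom 1 n - p) k * coeff (monom 1 k * monom 1 i mod p) (n - 1)"
      using ctrb_mat_canonical_index[OF p i, of k] by (simp add: mult.commute)
  qed
  also have "\<dots> = coeff (monom 1 i * monom 1 n mod p) (n - 1)"
    unfolding coeff_mult_mod_eq_sum[OF x_pow_minus_monic_mem[OF p], symmetric] \<open>_ mod p = _\<close> ..
  moreover note calculation
  moreover have "(mult_mod_mat n p (monom 1 1) ^\<^sub>m n * unit_col n (n - 1)) $$ (i, j)
      = mult_mod_mat n p (monom 1 n) $$ (i, n - 1)"
    unfolding mult_mod_mat_x_pow[OF p] j using i by (intro mult_unit_col_index) auto
  moreover have "mult_mod_mat n p (monom 1 n) $$ (i, n - 1) = coeff (monom 1 i * monom 1 n mod p) (n - 1)"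
    using i by (simp add: mult_mod_mat_def)
  ultimately show "(mult_mod_mat n p (monom 1 1) ^\<^sub>m n * unit_col n (n - 1)) $$ (i, j)
      = (ctrb_mat n (mult_mod_mat n p (monom 1 1)) (unit_col n (n - 1)) * coeff_col n (monom 1 n - p)) $$ (i, j)"
    by simp
qed (simp_all add: ctrb_mat_def coeff_col_def)

lemma obsv_mat_canonical:
  assumes p: "p \<in> monic_polys n" and c: "c \<in> polys_deg_lt n"
  shows "obsv_mat n (mult_mod_mat n p (monom 1 1)) (coeff_row n c) = mult_mod_mat n p c"
proof (rule eq_matI)
  fix i j assume "i < dim_row (mult_mod_mat n p c)" "j < dim_col (mult_mod_mat n p c)"
  then have "i < n" "j < n" by simp_all
  then have "obsv_mat n (mult_mod_mat n p (monom 1 1)) (coeff_row n c) $$ (i, j)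
      = (coeff_row n c * mult_mod_mat n p (monom 1 1) ^\<^sub>m i) $$ (0, j)"
    by (simp add: obsv_mat_def)
  also have "\<dots> = coeff (c * monom 1 i mod p) j"
    unfolding mult_mod_mat_x_pow[OF p] coeff_row_mult_mod_mat[OF c] using \<open>j < n\<close>
    by (simp add: coeff_row_def)
  also have "\<dots> = mult_mod_mat n p c $$ (i, j)"
    using \<open>i < n\<close> \<open>j < n\<close> by (simp add: mult_mod_mat_def mult.commute)
  finally show "obsv_mat n (mult_mod_mat n p (monom 1 1)) (coeff_row n c) $$ (i, j) = mult_mod_mat n p c $$ (i, j)" .
qed (simp_all add: obsv_mat_def)

lemma canonical_system_cc:
  assumes "y \<in> poly_pairs n"
  shows "completely_controllable n (canonical_system n y)"
proof (cases y)
  case (Pair p c)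
  then show ?thesis
    using assms invertible_ctrb_mat_canonical[of p n]
    by (simp add: canonical_system_def completely_controllable_def poly_pairs_def)
qed

lemma canonical_system_co_iff:
  assumes "y \<in> poly_pairs n"
  shows "completely_observable n (canonical_system n y) \<longleftrightarrow> y \<in> coprime_pairs n"
proof (cases y)
  case (Pair p c)
  then show ?thesis
    using assms obsv_mat_canonical[of p n c] invertible_mult_mod_mat_iff[of p n c]
    by (simp add: canonical_system_def completely_observable_def poly_pairs_def coprime_pairs_def)
qed

section \<open>The action of the general linear group and duality\<close>

definition inverse_pair :: "nat \<Rightarrow> 'a::semiring_1 mat \<Rightarrow> 'a mat \<Rightarrow> bool" where
  "inverse_pair n g h \<longleftrightarrow> g \<in> carrier_mat n n \<and> h \<in> carrier_mat n n \<and> g * h = 1\<^sub>m n \<and> h * g = 1\<^sub>m n"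

definition gl_act :: "'a::semiring_1 mat \<Rightarrow> 'a mat \<Rightarrow> 'a mat \<times> 'a mat \<times> 'a mat \<Rightarrow> 'a mat \<times> 'a mat \<times> 'a mat" where
  "gl_act g h = (\<lambda>(A, B, C). (g * A * h, g * B, C * h))"

lemma gl_orbit_rel_iff: "(x, y) \<in> gl_orbit_rel n \<longleftrightarrow> (\<exists>g h. inverse_pair n g h \<and> y = gl_act g h x)"
  by (cases x, cases y) (simp add: gl_orbit_rel_def gl_act_def inverse_pair_def)

lemma inverse_pair_sym: "inverse_pair n g h \<Longrightarrow> inverse_pair n h g"
  by (auto simp: inverse_pair_def)

lemma mult_inverse_pairs:
  assumes "g1 \<in> carrier_mat n n" "h1 \<in> carrier_mat n n" "g2 \<in> carrier_mat n n" "h2 \<in> carrier_mat n n"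
    and "g1 * h1 = 1\<^sub>m n" "g2 * h2 = 1\<^sub>m n"
  shows "(g2 * g1) * (h1 * h2) = (1\<^sub>m n :: 'a::semiring_1 mat)"
proof -
  have "(g2 * g1) * (h1 * h2) = g2 * ((g1 * h1) * h2)"
    using assms(1-4) by (simp add: assoc_mult_mat[of _ n n _ n _ n])
  also have "\<dots> = 1\<^sub>m n" using assms(4-6) by simp
  finally show ?thesis .
qed

lemma inverse_pair_mult:
  "inverse_pair n g1 h1 \<Longrightarrow> inverse_pair n g2 h2 \<Longrightarrow> inverse_pair n (g2 * g1) (h1 * h2)"
  unfolding inverse_pair_def using mult_inverse_pairs[of g1 n h1 g2 h2] mult_inverse_pairs[of h2 n g2 h1 g1]
  by auto

lemma gl_act_triples: "inverse_pair n g h \<Longrightarrow> x \<in> triples n \<Longrightarrow> gl_act g h x \<in> triples n"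
  by (cases x) (auto simp: gl_act_def triples_def inverse_pair_def)

lemma gl_act_one: "x \<in> triples n \<Longrightarrow> gl_act (1\<^sub>m n) (1\<^sub>m n) x = x"
  by (cases x) (auto simp: gl_act_def triples_def)

lemma gl_act_gl_act:
  assumes "inverse_pair n g1 h1" "inverse_pair n g2 h2" "x \<in> triples n"
  shows "gl_act g2 h2 (gl_act g1 h1 x) = gl_act (g2 * g1) (h1 * h2) x"
proof (cases x)
  case (fields A B C)
  have carr: "g1 \<in> carrier_mat n n" "h1 \<in> carrier_mat n n" "g2 \<in> carrier_mat n n" "h2 \<in> carrier_mat n n"
    "A \<in> carrier_mat n n" "B \<in> carrier_mat n 1" "C \<in> carrier_mat 1 n"
    using assms fields by (auto simp: inverse_pair_def triples_def)
  have "g2 * (g1 * A * h1) * h2 = g2 * g1 * A * (h1 * h2)"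
    using carr by (simp add: assoc_mult_mat[of _ n n _ n _ n])
  moreover have "g2 * (g1 * B) = g2 * g1 * B"
    using carr by (simp add: assoc_mult_mat[of _ n n _ n _ 1])
  moreover have "C * h1 * h2 = C * (h1 * h2)"
    using carr by (simp add: assoc_mult_mat[of _ 1 n _ n _ n])
  ultimately show ?thesis using fields by (simp add: gl_act_def)
qed

lemma gl_orbit_rel_refl: "x \<in> triples n \<Longrightarrow> (x, x) \<in> gl_orbit_rel n"
  unfolding gl_orbit_rel_iff by (intro exI[of _ "1\<^sub>m n"]) (simp add: gl_act_one inverse_pair_def)

lemma gl_orbit_rel_triples: "x \<in> triples n \<Longrightarrow> (x, y) \<in> gl_orbit_rel n \<Longrightarrow> y \<in> triples n"
  unfolding gl_orbit_rel_iff using gl_act_triples by blast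

lemma gl_orbit_rel_sym:
  assumes "x \<in> triples n" "(x, y) \<in> gl_orbit_rel n"
  shows "(y, x) \<in> gl_orbit_rel n"
proof -
  obtain g h where gh: "inverse_pair n g h" and y: "y = gl_act g h x"
    using assms(2) unfolding gl_orbit_rel_iff by blast
  then have "gl_act h g y = gl_act (h * g) (h * g) x"
    using gl_act_gl_act[OF gh inverse_pair_sym[OF gh] assms(1)] by simp
  also have "\<dots> = x" using gh assms(1) by (simp add: inverse_pair_def gl_act_one)
  finally have "gl_act h g y = x" .
  then show ?thesis unfolding gl_orbit_rel_iff using inverse_pair_sym[OF gh] by blast
qed

lemma gl_orbit_rel_trans:
  assumes "x \<in> triples n" "(x, y) \<in> gl_orbit_rel n" "(y, z) \<in> gl_orbit_rel n"
  shows "(x, z) \<in> gl_orbit_rel n"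
proof -
  obtain g1 h1 g2 h2 where gh: "inverse_pair n g1 h1" "inverse_pair n g2 h2"
    and "y = gl_act g1 h1 x" "z = gl_act g2 h2 y"
    using assms(2,3) unfolding gl_orbit_rel_iff by blast
  then have "z = gl_act (g2 * g1) (h1 * h2) x" using assms(1) by (simp add: gl_act_gl_act)
  then show ?thesis unfolding gl_orbit_rel_iff using inverse_pair_mult[OF gh] by blast
qed

lemma pow_conj_mult:
  assumes gh: "inverse_pair n g h" and A: "A \<in> carrier_mat n n" and X: "X \<in> carrier_mat n m"
  shows "(g * A * h) ^\<^sub>m k * (g * X) = g * (A ^\<^sub>m k * X)"
proof -
  have g: "g \<in> carrier_mat n n" and h: "h \<in> carrier_mat n n" and "h * g = 1\<^sub>m n"
    using gh by (auto simp: inverse_pair_def)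
  have "similar_mat_wit (g * A * h) A g h"
    using gh A by (intro similar_mat_witI) (auto simp: inverse_pair_def)
  then have "(g * A * h) ^\<^sub>m k * (g * X) = g * A ^\<^sub>m k * ((h * g) * X)"
    using g h A X by (simp add: similar_mat_wit_pow_id assoc_mult_mat[of _ n n _ n _ m])
  also have "\<dots> = g * (A ^\<^sub>m k * X)"
    using \<open>h * g = 1\<^sub>m n\<close> g A X by (simp add: assoc_mult_mat[of _ n n _ n _ m])
  finally show ?thesis .
qed

lemma ctrb_mat_conj:
  assumes gh: "inverse_pair n g h" and A: "A \<in> carrier_mat n n" and B: "B \<in> carrier_mat n 1"
  shows "ctrb_mat n (g * A * h) (g * B) = g * ctrb_mat n A B"
proof (rule eq_matI)
  have g: "g \<in> carrier_mat n n" using gh by (simp add: inverse_pair_def)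
  fix i j assume "i < dim_row (g * ctrb_mat n A B)" "j < dim_col (g * ctrb_mat n A B)"
  then have "i < n" "j < n" using g by (simp_all add: ctrb_mat_def)
  then show "ctrb_mat n (g * A * h) (g * B) $$ (i, j) = (g * ctrb_mat n A B) $$ (i, j)"
    using g A B by (simp add: ctrb_mat_def pow_conj_mult[OF gh A B] scalar_prod_def)
qed (use gh in \<open>auto simp: ctrb_mat_def inverse_pair_def\<close>)

lemma completely_controllable_gl_act:
  assumes gh: "inverse_pair n g h" and x: "x \<in> triples n"
  shows "completely_controllable n (gl_act g h x) \<longleftrightarrow> completely_controllable n x"
proof (cases x)
  case (fields A B C)
  have A: "A \<in> carrier_mat n n" and B: "B \<in> carrier_mat n 1" using x fields by (auto simp: triples_def)
  have g: "g \<in> carrier_mat n n" and "det g \<noteq> 0"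
    using gh invertible_mat_iff_det[of g n] unfolding inverse_pair_def invertible_mat_def inverts_mat_def
    by auto
  have K: "ctrb_mat n A B \<in> carrier_mat n n" by (simp add: ctrb_mat_def)
  then show ?thesis
    using fields ctrb_mat_conj[OF gh A B] invertible_mat_iff_det[OF K] det_mult[OF g K] \<open>det g \<noteq> 0\<close>
      invertible_mat_iff_det[OF mult_carrier_mat[OF g K]]
    by (simp add: gl_act_def completely_controllable_def)
qed

lemma completely_controllable_orbit:
  "x \<in> triples n \<Longrightarrow> (x, y) \<in> gl_orbit_rel n \<Longrightarrow> completely_controllable n y \<longleftrightarrow> completely_controllable n x"
  unfolding gl_orbit_rel_iff using completely_controllable_gl_act by blast

definition dual_system :: "'a mat \<times> 'a mat \<times> 'a mat \<Rightarrow> 'a mat \<times> 'a mat \<times> 'a mat" where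
  "dual_system = (\<lambda>(A, B, C). (A\<^sup>T, C\<^sup>T, B\<^sup>T))"

lemma dual_system_triples: "x \<in> triples n \<Longrightarrow> dual_system x \<in> triples n"
  by (cases x) (simp add: dual_system_def triples_def)

lemma dual_dual_system [simp]: "dual_system (dual_system x) = x"
  by (cases x) (simp add: dual_system_def)

lemma dual_system_gl_act:
  assumes "inverse_pair n g h" "x \<in> triples n"
  shows "dual_system (gl_act g h x) = gl_act h\<^sup>T g\<^sup>T (dual_system x)"
  using assms
  by (cases x) (auto simp: gl_act_def dual_system_def triples_def inverse_pair_def
      transpose_mult[of _ n n _ n] transpose_mult[of _ n n _ 1] transpose_mult[of _ 1 n _ n]
      assoc_mult_mat[of _ n n _ n _ n])

lemma inverse_pair_transpose:
  assumes "inverse_pair n (g :: 'a::comm_semiring_1 mat) h"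
  shows "inverse_pair n h\<^sup>T g\<^sup>T"
proof -
  have g: "g \<in> carrier_mat n n" and h: "h \<in> carrier_mat n n" and "g * h = 1\<^sub>m n" "h * g = 1\<^sub>m n"
    using assms by (auto simp: inverse_pair_def)
  have "h\<^sup>T * g\<^sup>T = (g * h)\<^sup>T" "g\<^sup>T * h\<^sup>T = (h * g)\<^sup>T"
    using transpose_mult[OF g h] transpose_mult[OF h g] by simp_all
  then have "h\<^sup>T * g\<^sup>T = 1\<^sub>m n" "g\<^sup>T * h\<^sup>T = 1\<^sub>m n"
    using \<open>g * h = 1\<^sub>m n\<close> \<open>h * g = 1\<^sub>m n\<close> by simp_all
  with g h show ?thesis by (simp add: inverse_pair_def)
qed

lemma dual_system_orbit:
  assumes "x \<in> triples n" "(x, y) \<in> gl_orbit_rel n"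
  shows "(dual_system x, dual_system y) \<in> gl_orbit_rel n"
proof -
  obtain g h where gh: "inverse_pair n g h" and "y = gl_act g h x"
    using assms(2) unfolding gl_orbit_rel_iff by blast
  then have "dual_system y = gl_act h\<^sup>T g\<^sup>T (dual_system x)" using assms(1) by (simp add: dual_system_gl_act)
  then show ?thesis unfolding gl_orbit_rel_iff using inverse_pair_transpose[OF gh] by blast
qed

lemma pow_mat_mult_comm:
  assumes A: "(A :: 'a::semiring_1 mat) \<in> carrier_mat n n"
  shows "A * A ^\<^sub>m k = A ^\<^sub>m k * A"
proof (induction k)
  case (Suc k)
  have "A * A ^\<^sub>m Suc k = (A * A ^\<^sub>m k) * A" using A by (simp add: assoc_mult_mat[of _ n n _ n _ n])
  then show ?case using Suc by simp
qed (use A in simp)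

lemma pow_mat_transpose:
  assumes A: "(A :: 'a::comm_semiring_1 mat) \<in> carrier_mat n n"
  shows "A\<^sup>T ^\<^sub>m k = (A ^\<^sub>m k)\<^sup>T"
proof (induction k)
  case (Suc k)
  have "A\<^sup>T ^\<^sub>m Suc k = (A ^\<^sub>m k)\<^sup>T * A\<^sup>T" using Suc by simp
  also have "\<dots> = (A * A ^\<^sub>m k)\<^sup>T" by (rule transpose_mult[OF A pow_carrier_mat[OF A], symmetric])
  also have "\<dots> = (A ^\<^sub>m Suc k)\<^sup>T" using pow_mat_mult_comm[OF A] by simp
  finally show ?case .
qed (use A in simp)

lemma obsv_mat_eq_transpose_ctrb_mat:
  assumes A: "(A :: 'a::field mat) \<in> carrier_mat n n" and C: "C \<in> carrier_mat 1 n"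
  shows "obsv_mat n A C = (ctrb_mat n A\<^sup>T C\<^sup>T)\<^sup>T"
proof (rule eq_matI)
  fix i j assume "i < dim_row (ctrb_mat n A\<^sup>T C\<^sup>T)\<^sup>T" "j < dim_col (ctrb_mat n A\<^sup>T C\<^sup>T)\<^sup>T"
  then have ij: "i < n" "j < n" by (simp_all add: ctrb_mat_def)
  have "(ctrb_mat n A\<^sup>T C\<^sup>T)\<^sup>T $$ (i, j) = ((A ^\<^sub>m i)\<^sup>T * C\<^sup>T) $$ (j, 0)"
    using ij by (simp add: ctrb_mat_def pow_mat_transpose[OF A])
  also have "\<dots> = (C * A ^\<^sub>m i)\<^sup>T $$ (j, 0)"
    using A C by (simp add: transpose_mult[of _ 1 n _ n])
  also have "\<dots> = obsv_mat n A C $$ (i, j)" using ij A C by (simp add: obsv_mat_def)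
  finally show "obsv_mat n A C $$ (i, j) = (ctrb_mat n A\<^sup>T C\<^sup>T)\<^sup>T $$ (i, j)" by simp
qed (simp_all add: obsv_mat_def ctrb_mat_def)

lemma completely_observable_iff_dual:
  assumes x: "x \<in> triples n"
  shows "completely_observable n x \<longleftrightarrow> completely_controllable n (dual_system x)"
proof (cases x)
  case (fields A B C)
  then have A: "A \<in> carrier_mat n n" and C: "C \<in> carrier_mat 1 n" using x by (auto simp: triples_def)
  have K: "ctrb_mat n A\<^sup>T C\<^sup>T \<in> carrier_mat n n" by (simp add: ctrb_mat_def)
  then show ?thesis
    using fields obsv_mat_eq_transpose_ctrb_mat[OF A C] invertible_mat_iff_det[OF K]
      invertible_mat_iff_det[of "(ctrb_mat n A\<^sup>T C\<^sup>T)\<^sup>T" n] det_transpose[OF K]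
    by (simp add: completely_observable_def completely_controllable_def dual_system_def)
qed

lemma completely_observable_orbit:
  assumes "x \<in> triples n" "(x, y) \<in> gl_orbit_rel n"
  shows "completely_observable n y \<longleftrightarrow> completely_observable n x"
  using assms completely_controllable_orbit[OF dual_system_triples dual_system_orbit]
  by (simp add: completely_observable_iff_dual gl_orbit_rel_triples)

section \<open>Normal form of completely controllable systems\<close>

definition companion_mat :: "nat \<Rightarrow> 'a::field mat \<Rightarrow> 'a mat" where
  "companion_mat n \<alpha> = mat n n (\<lambda>(i, j). if j + 1 < n then (if i = j + 1 then 1 else 0) else \<alpha> $$ (i, 0))"

lemma companion_mat_carrier [simp]: "companion_mat n \<alpha> \<in> carrier_mat n n"
  by (simp add: companion_mat_def)

text \<open>\<open>A\<close> shifts the columns \<open>A^j B\<close> of \<open>K\<close> one step, and sends the last one to \<open>A^n B = K \<alpha>\<close>.\<close>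

lemma ctrb_mat_companion:
  assumes A: "(A :: 'a::field mat) \<in> carrier_mat n n" and B: "B \<in> carrier_mat n 1"
    and \<alpha>: "\<alpha> \<in> carrier_mat n 1" and rel: "A ^\<^sub>m n * B = ctrb_mat n A B * \<alpha>"
  shows "A * ctrb_mat n A B = ctrb_mat n A B * companion_mat n \<alpha>"
proof (rule eq_matI)
  let ?K = "ctrb_mat n A B"
  fix i j assume "i < dim_row (?K * companion_mat n \<alpha>)" "j < dim_col (?K * companion_mat n \<alpha>)"
  then have i: "i < n" and j: "j < n" by (simp_all add: ctrb_mat_def companion_mat_def)
  have "(A * ?K) $$ (i, j) = (A * (A ^\<^sub>m j * B)) $$ (i, 0)"
    using i j A B by (simp add: scalar_prod_def ctrb_mat_def)
  also have "A * (A ^\<^sub>m j * B) = A ^\<^sub>m Suc j * B"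
    using A B pow_mat_mult_comm[OF A, of j] by (simp add: assoc_mult_mat[symmetric, of _ n n _ n _ 1])
  finally have L: "(A * ?K) $$ (i, j) = (A ^\<^sub>m Suc j * B) $$ (i, 0)" .
  show "(A * ?K) $$ (i, j) = (?K * companion_mat n \<alpha>) $$ (i, j)"
  proof (cases "j + 1 < n")
    case True
    have "(?K * companion_mat n \<alpha>) $$ (i, j) = (\<Sum>k = 0..<n. ?K $$ (i, k) * (if k = j + 1 then 1 else 0))"
      using i j True by (simp add: scalar_prod_def ctrb_mat_def companion_mat_def)
    also have "\<dots> = ?K $$ (i, j + 1)" using True by (simp add: if_distrib cong: if_cong)
    finally show ?thesis using L i True by (simp add: ctrb_mat_def)
  next
    case False
    then have "Suc j = n" using j by simp
    have "(?K * companion_mat n \<alpha>) $$ (i, j) = (?K * \<alpha>) $$ (i, 0)"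
      using i j False \<alpha> by (simp add: scalar_prod_def ctrb_mat_def companion_mat_def)
    then show ?thesis using L rel \<open>Suc j = n\<close> by simp
  qed
qed (use A in \<open>simp_all add: ctrb_mat_def companion_mat_def\<close>)

lemma ctrb_mat_mult_unit_col_0:
  assumes A: "(A :: 'a::field mat) \<in> carrier_mat n n" and B: "B \<in> carrier_mat n 1"
  shows "ctrb_mat n A B * unit_col n 0 = B"
proof (rule eq_matI)
  fix i j assume "i < dim_row B" "j < dim_col B"
  then have "i < n" "j = 0" using B by auto
  then have "(ctrb_mat n A B * unit_col n 0) $$ (i, 0) = ctrb_mat n A B $$ (i, 0)"
    by (intro mult_unit_col_index) (simp_all add: ctrb_mat_def)
  also have "ctrb_mat n A B $$ (i, 0) = (A ^\<^sub>m 0 * B) $$ (i, 0)"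
    using \<open>i < n\<close> by (simp add: ctrb_mat_def del: pow_mat.simps)
  also have "A ^\<^sub>m 0 * B = B" using A B by simp
  finally show "(ctrb_mat n A B * unit_col n 0) $$ (i, j) = B $$ (i, j)" using \<open>j = 0\<close> by simp
qed (use B in \<open>simp_all add: ctrb_mat_def\<close>)

text \<open>The conjugating matrix is \<open>K' K\<^sup>-\<^sup>1\<close>, where \<open>K\<close>, \<open>K'\<close> are the controllability matrices.\<close>

lemma ctrb_conjugate:
  fixes A B A' B' :: "'a::field mat"
  assumes A: "A \<in> carrier_mat n n" and B: "B \<in> carrier_mat n 1"
    and A': "A' \<in> carrier_mat n n" and B': "B' \<in> carrier_mat n 1"
    and inv: "invertible_mat (ctrb_mat n A B)" and inv': "invertible_mat (ctrb_mat n A' B')"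
    and \<alpha>: "\<alpha> \<in> carrier_mat n 1"
    and rel: "A ^\<^sub>m n * B = ctrb_mat n A B * \<alpha>" and rel': "A' ^\<^sub>m n * B' = ctrb_mat n A' B' * \<alpha>"
  obtains g h where "inverse_pair n g h" "g * A * h = A'" "g * B = B'"
proof -
  let ?K = "ctrb_mat n A B" and ?K' = "ctrb_mat n A' B'" and ?C = "companion_mat n \<alpha>"
  have K: "?K \<in> carrier_mat n n" and K': "?K' \<in> carrier_mat n n" by (simp_all add: ctrb_mat_def)
  obtain Ki where Ki: "Ki \<in> carrier_mat n n" "?K * Ki = 1\<^sub>m n" "Ki * ?K = 1\<^sub>m n"
    by (rule invertible_mat_inverse[OF K inv])
  obtain Ki' where Ki': "Ki' \<in> carrier_mat n n" "?K' * Ki' = 1\<^sub>m n" "Ki' * ?K' = 1\<^sub>m n"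
    by (rule invertible_mat_inverse[OF K' inv'])
  have AK: "A * ?K = ?K * ?C" by (rule ctrb_mat_companion[OF A B \<alpha> rel])
  have AK': "A' * ?K' = ?K' * ?C" by (rule ctrb_mat_companion[OF A' B' \<alpha> rel'])
  note carr = K K' Ki(1) Ki'(1) A A' companion_mat_carrier[of n \<alpha>]
  have "inverse_pair n (?K' * Ki) (?K * Ki')"
    using mult_inverse_pairs[OF Ki(1) K K' Ki'(1) Ki(3) Ki'(2)]
      mult_inverse_pairs[OF Ki'(1) K' K Ki(1) Ki'(3) Ki(2)] carr
    by (simp add: inverse_pair_def)
  moreover have "(?K' * Ki) * A * (?K * Ki') = A'"
  proof -
    have "(?K' * Ki) * A * (?K * Ki') = ?K' * (Ki * (A * ?K)) * Ki'"
      using carr by (simp add: assoc_mult_mat[of _ n n _ n _ n])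
    also have "Ki * (A * ?K) = ?C"
      unfolding AK by (rule mult_left_inverse[OF Ki(1) K Ki(3) companion_mat_carrier])
    also have "?K' * ?C * Ki' = A'"
      unfolding AK'[symmetric] using carr Ki'(2) by (simp add: assoc_mult_mat[of _ n n _ n _ n])
    finally show ?thesis .
  qed
  moreover have "(?K' * Ki) * B = B'"
  proof -
    have "(?K' * Ki) * B = (?K' * Ki) * (?K * unit_col n 0)"
      by (simp only: ctrb_mat_mult_unit_col_0[OF A B])
    also have "\<dots> = ?K' * (Ki * (?K * unit_col n 0))"
      by (rule assoc_mult_mat[OF K' Ki(1) mult_carrier_mat[OF K unit_col_carrier]])
    also have "\<dots> = B'"
      by (simp only: mult_left_inverse[OF Ki(1) K Ki(3) unit_col_carrier] ctrb_mat_mult_unit_col_0[OF A' B'])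
    finally show ?thesis .
  qed
  ultimately show ?thesis by (rule that)
qed

lemma ctrb_relation_conj:
  assumes gh: "inverse_pair n g h" and A: "A \<in> carrier_mat n n" and B: "B \<in> carrier_mat n 1"
    and \<alpha>: "\<alpha> \<in> carrier_mat n 1" and rel: "A ^\<^sub>m n * B = ctrb_mat n A B * \<alpha>"
  shows "(g * A * h) ^\<^sub>m n * (g * B) = ctrb_mat n (g * A * h) (g * B) * \<alpha>"
proof -
  have g: "g \<in> carrier_mat n n" using gh by (simp add: inverse_pair_def)
  have "(g * A * h) ^\<^sub>m n * (g * B) = g * (ctrb_mat n A B * \<alpha>)"
    unfolding pow_conj_mult[OF gh A B] rel ..
  also have "\<dots> = ctrb_mat n (g * A * h) (g * B) * \<alpha>"
    unfolding ctrb_mat_conj[OF gh A B] using g \<alpha> by (simp add: assoc_mult_mat[of _ n n _ n _ 1] ctrb_mat_def)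
  finally show ?thesis .
qed

lemma ctrb_stabiliser_trivial:
  assumes gh: "inverse_pair n g h" and A: "A \<in> carrier_mat n n" and B: "B \<in> carrier_mat n 1"
    and inv: "invertible_mat (ctrb_mat n A B)" and "g * A * h = A" "g * B = B"
  shows "g = 1\<^sub>m n" "h = 1\<^sub>m n"
proof -
  let ?K = "ctrb_mat n A B"
  have g: "g \<in> carrier_mat n n" and h: "h \<in> carrier_mat n n" and "g * h = 1\<^sub>m n"
    using gh by (auto simp: inverse_pair_def)
  have K: "?K \<in> carrier_mat n n" by (simp add: ctrb_mat_def)
  obtain Ki where Ki: "Ki \<in> carrier_mat n n" "?K * Ki = 1\<^sub>m n" by (rule invertible_mat_inverse[OF K inv])
  have "g * ?K = ?K" using ctrb_mat_conj[OF gh A B] assms(5,6) by simp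
  have "g = g * (?K * Ki)" using g Ki(2) by simp
  also have "\<dots> = (g * ?K) * Ki" by (rule assoc_mult_mat[OF g K Ki(1), symmetric])
  also have "\<dots> = 1\<^sub>m n" using \<open>g * ?K = ?K\<close> Ki(2) by simp
  finally show "g = 1\<^sub>m n" .
  then show "h = 1\<^sub>m n" using \<open>g * h = 1\<^sub>m n\<close> h by simp
qed

lemma coeff_col_x_pow_minus_monic_surj:
  assumes "\<alpha> \<in> carrier_mat n 1"
  obtains p where "p \<in> monic_polys n" "coeff_col n (monom 1 n - p) = \<alpha>"
proof
  let ?s = "poly_of_coeffs n (\<lambda>i. \<alpha> $$ (i, 0))"
  have "- ?s \<in> polys_deg_lt n" using poly_of_coeffs_mem by (auto simp: polys_deg_lt_def)
  then show "monom 1 n - ?s \<in> monic_polys n" unfolding monic_polys_eq_image by force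
  show "coeff_col n (monom 1 n - (monom 1 n - ?s)) = \<alpha>" by (simp add: coeff_col_poly_of_coeffs[OF assms])
qed

lemma canonical_system_exists:
  assumes x: "x \<in> triples n" and cc: "completely_controllable n x"
  obtains y where "y \<in> poly_pairs n" "(x, canonical_system n y) \<in> gl_orbit_rel n"
proof (cases x)
  case (fields A B C)
  have A: "A \<in> carrier_mat n n" and B: "B \<in> carrier_mat n 1" and C: "C \<in> carrier_mat 1 n"
    using x fields by (auto simp: triples_def)
  let ?K = "ctrb_mat n A B"
  have K: "?K \<in> carrier_mat n n" by (simp add: ctrb_mat_def)
  have inv: "invertible_mat ?K" using cc fields by (simp add: completely_controllable_def)
  obtain Ki where Ki: "Ki \<in> carrier_mat n n" "?K * Ki = 1\<^sub>m n" by (rule invertible_mat_inverse[OF K inv])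
  have AnB: "A ^\<^sub>m n * B \<in> carrier_mat n 1" by (rule mult_carrier_mat[OF pow_carrier_mat[OF A] B])
  define \<alpha> where "\<alpha> = Ki * (A ^\<^sub>m n * B)"
  have \<alpha>: "\<alpha> \<in> carrier_mat n 1"
    unfolding \<alpha>_def by (rule mult_carrier_mat[OF Ki(1) AnB])
  have rel: "A ^\<^sub>m n * B = ?K * \<alpha>"
    unfolding \<alpha>_def by (rule mult_left_inverse[OF K Ki(1) Ki(2) AnB, symmetric])
  obtain p where p: "p \<in> monic_polys n" and "coeff_col n (monom 1 n - p) = \<alpha>"
    by (rule coeff_col_x_pow_minus_monic_surj[OF \<alpha>])
  then have rel0: "mult_mod_mat n p (monom 1 1) ^\<^sub>m n * unit_col n (n - 1)
      = ctrb_mat n (mult_mod_mat n p (monom 1 1)) (unit_col n (n - 1)) * \<alpha>"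
    using canonical_pow_mult_unit_col[OF p] by simp
  obtain g h where gh: "inverse_pair n g h"
    and gAh: "g * A * h = mult_mod_mat n p (monom 1 1)" and gB: "g * B = unit_col n (n - 1)"
    by (rule ctrb_conjugate[OF A B mult_mod_mat_carrier unit_col_carrier inv
          invertible_ctrb_mat_canonical[OF p] \<alpha> rel rel0])
  define c where "c = poly_of_coeffs n (\<lambda>j. (C * h) $$ (0, j))"
  have "coeff_row n c = C * h"
    unfolding c_def using C gh by (intro coeff_row_poly_of_coeffs) (auto simp: inverse_pair_def)
  then have "canonical_system n (p, c) = gl_act g h x"
    using fields gAh gB by (simp add: canonical_system_def gl_act_def)
  moreover have "(p, c) \<in> poly_pairs n" using p poly_of_coeffs_mem by (simp add: poly_pairs_def c_def)
  ultimately show ?thesis using gh by (intro that[of "(p, c)"]) (auto simp: gl_orbit_rel_iff)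
qed

lemma canonical_system_unique:
  assumes y: "y \<in> poly_pairs n" and y': "y' \<in> poly_pairs n"
    and rel: "(canonical_system n y, canonical_system n y') \<in> gl_orbit_rel n"
  shows "y = y'"
proof -
  obtain p c p' c' where yy: "y = (p, c)" "y' = (p', c')" by fastforce
  have p: "p \<in> monic_polys n" and c: "c \<in> polys_deg_lt n"
    and p': "p' \<in> monic_polys n" and c': "c' \<in> polys_deg_lt n"
    using y y' yy by (auto simp: poly_pairs_def)
  let ?A = "mult_mod_mat n p (monom 1 1)" and ?A' = "mult_mod_mat n p' (monom 1 1)"
    and ?u = "unit_col n (n - 1) :: 'a mat"
  obtain g h where gh: "inverse_pair n g h"
    and "canonical_system n y' = gl_act g h (canonical_system n y)"
    using rel unfolding gl_orbit_rel_iff by blast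
  then have A': "g * ?A * h = ?A'" and u: "g * ?u = ?u" and C': "coeff_row n c * h = coeff_row n c'"
    using yy by (simp_all add: canonical_system_def gl_act_def)
  have K': "ctrb_mat n ?A' ?u \<in> carrier_mat n n" by (simp add: ctrb_mat_def)
  have "(g * ?A * h) ^\<^sub>m n * (g * ?u) = ctrb_mat n (g * ?A * h) (g * ?u) * coeff_col n (monom 1 n - p)"
    by (rule ctrb_relation_conj[OF gh mult_mod_mat_carrier unit_col_carrier coeff_col_carrier
          canonical_pow_mult_unit_col[OF p]])
  then have "ctrb_mat n ?A' ?u * coeff_col n (monom 1 n - p) = ?A' ^\<^sub>m n * ?u"
    unfolding A' u ..
  also have "\<dots> = ctrb_mat n ?A' ?u * coeff_col n (monom 1 n - p')"
    by (rule canonical_pow_mult_unit_col[OF p'])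
  finally have "coeff_col n (monom 1 n - p) = coeff_col n (monom 1 n - p')"
    by (rule invertible_mat_mult_left_cancel[OF K' invertible_ctrb_mat_canonical[OF p']
          coeff_col_carrier coeff_col_carrier])
  then have "p = p'"
    using coeff_col_eq_iff[OF x_pow_minus_monic_mem[OF p] x_pow_minus_monic_mem[OF p']] by simp
  then have "h = 1\<^sub>m n"
    using ctrb_stabiliser_trivial(2)[OF gh mult_mod_mat_carrier unit_col_carrier
        invertible_ctrb_mat_canonical[OF p]] A' u by simp
  then have "c = c'"
    using C' coeff_row_eq_iff[OF c c'] right_mult_one_mat[OF coeff_row_carrier[of n c]] by simp
  with \<open>p = p'\<close> show ?thesis using yy by simp
qed

section \<open>Counting the orbits\<close>

lemma card_quotient_eq_card_transversal:
  assumes refl: "\<And>x. x \<in> S \<Longrightarrow> (x, x) \<in> r"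
    and sym: "\<And>x y. x \<in> S \<Longrightarrow> (x, y) \<in> r \<Longrightarrow> (y, x) \<in> r"
    and trans: "\<And>x y z. x \<in> S \<Longrightarrow> (x, y) \<in> r \<Longrightarrow> (y, z) \<in> r \<Longrightarrow> (x, z) \<in> r"
    and "T \<subseteq> S"
    and cover: "\<And>x. x \<in> S \<Longrightarrow> \<exists>t\<in>T. (x, t) \<in> r"
    and unique: "\<And>t t'. t \<in> T \<Longrightarrow> t' \<in> T \<Longrightarrow> (t, t') \<in> r \<Longrightarrow> t = t'"
  shows "card (S // r) = card T"
proof -
  have class_eq: "r `` {x} = r `` {t}" if "x \<in> S" "t \<in> S" "(x, t) \<in> r" for x t
    using that sym trans by blast
  have "bij_betw (\<lambda>t. r `` {t}) T (S // r)"
  proof (rule bij_betw_imageI)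
    show "inj_on (\<lambda>t. r `` {t}) T"
      using refl unique \<open>T \<subseteq> S\<close> by (intro inj_onI) blast
    show "(\<lambda>t. r `` {t}) ` T = S // r"
    proof (intro subset_antisym subsetI)
      fix X assume "X \<in> (\<lambda>t. r `` {t}) ` T"
      then show "X \<in> S // r" using \<open>T \<subseteq> S\<close> by (auto intro: quotientI)
    next
      fix X assume "X \<in> S // r"
      then obtain x where "x \<in> S" "X = r `` {x}" by (auto elim: quotientE)
      with cover obtain t where "t \<in> T" "(x, t) \<in> r" by blast
      then show "X \<in> (\<lambda>t. r `` {t}) ` T"
        using class_eq \<open>x \<in> S\<close> \<open>X = _\<close> \<open>T \<subseteq> S\<close> by blast
    qed
  qed
  then show ?thesis by (simp add: bij_betw_same_card)
qed

text \<open>The duals account for the orbits that are observable but not controllable.\<close>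

definition canonical_transversal :: "nat \<Rightarrow> ('a::field mat \<times> 'a mat \<times> 'a mat) set" where
  "canonical_transversal n = canonical_system n ` poly_pairs n
     \<union> dual_system ` canonical_system n ` (poly_pairs n - coprime_pairs n)"

lemma dual_canonical_system_not_cc:
  "y \<in> poly_pairs n - coprime_pairs n \<Longrightarrow> \<not> completely_controllable n (dual_system (canonical_system n y))"
  using canonical_system_co_iff[of y n] completely_observable_iff_dual[OF canonical_system_triples[of n y]]
  by auto

lemma canonical_transversal_subset: "canonical_transversal n \<subseteq> cc_or_co n"
proof
  fix z assume "z \<in> canonical_transversal n"
  then consider y where "y \<in> poly_pairs n" "z = canonical_system n y"
    | y where "y \<in> poly_pairs n - coprime_pairs n" "z = dual_system (canonical_system n y)"
    unfolding canonical_transversal_def by blast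
  then show "z \<in> cc_or_co n"
  proof cases
    case 1
    then show ?thesis by (simp add: cc_or_co_def canonical_system_triples canonical_system_cc)
  next
    case 2
    then have "completely_observable n z"
      using completely_observable_iff_dual[OF dual_system_triples[OF canonical_system_triples[of n y]]]
        canonical_system_cc[of y n] by simp
    then show ?thesis
      using 2 by (simp add: cc_or_co_def dual_system_triples canonical_system_triples)
  qed
qed

lemma canonical_transversal_cover:
  assumes x: "x \<in> cc_or_co n"
  shows "\<exists>t\<in>canonical_transversal n. (x, t) \<in> gl_orbit_rel n"
proof -
  have xt: "x \<in> triples n" using x by (simp add: cc_or_co_def)
  show ?thesis
  proof (cases "completely_controllable n x")
    case True
    then obtain y where "y \<in> poly_pairs n" "(x, canonical_system n y) \<in> gl_orbit_rel n"
      by (rule canonical_system_exists[OF xt])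
    then show ?thesis unfolding canonical_transversal_def by blast
  next
    case False
    then have "completely_controllable n (dual_system x)"
      using x completely_observable_iff_dual[OF xt] by (simp add: cc_or_co_def)
    then obtain y where y: "y \<in> poly_pairs n"
      and r: "(dual_system x, canonical_system n y) \<in> gl_orbit_rel n"
      by (rule canonical_system_exists[OF dual_system_triples[OF xt]])
    have "(x, dual_system (canonical_system n y)) \<in> gl_orbit_rel n"
      using dual_system_orbit[OF dual_system_triples[OF xt] r] by simp
    moreover have "y \<notin> coprime_pairs n"
      using False y completely_observable_orbit[OF dual_system_triples[OF xt] r]
        canonical_system_co_iff[OF y] completely_observable_iff_dual[OF dual_system_triples[OF xt]]
      by simp
    ultimately show ?thesis using y unfolding canonical_transversal_def by blast
  qed
qed

lemma canonical_transversal_unique: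
  assumes "t \<in> canonical_transversal n" "t' \<in> canonical_transversal n" "(t, t') \<in> gl_orbit_rel n"
  shows "t = t'"
proof -
  have t: "t \<in> triples n" using assms(1) canonical_transversal_subset by (auto simp: cc_or_co_def)
  have cc: "completely_controllable n t' \<longleftrightarrow> completely_controllable n t"
    by (rule completely_controllable_orbit[OF t assms(3)])
  consider y y' where "y \<in> poly_pairs n" "y' \<in> poly_pairs n"
      "t = canonical_system n y" "t' = canonical_system n y'"
    | y y' where "y \<in> poly_pairs n - coprime_pairs n" "y' \<in> poly_pairs n - coprime_pairs n"
      "t = dual_system (canonical_system n y)" "t' = dual_system (canonical_system n y')"
    using assms(1,2) cc canonical_system_cc dual_canonical_system_not_cc
    unfolding canonical_transversal_def by blast
  then show ?thesis
  proof cases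
    case 1
    then show ?thesis using assms(3) canonical_system_unique by blast
  next
    case 2
    then have "(canonical_system n y, canonical_system n y') \<in> gl_orbit_rel n"
      using dual_system_orbit[OF t assms(3)] by simp
    then show ?thesis using 2 canonical_system_unique[of y n y'] by simp
  qed
qed

lemma card_canonical_transversal:
  "card (canonical_transversal n :: ('a::{field,finite} mat \<times> 'a mat \<times> 'a mat) set)
     = card (UNIV :: 'a set) ^ (2 * n) + card (poly_pairs n - coprime_pairs n :: ('a poly \<times> _) set)"
proof -
  have inj: "inj_on (canonical_system n) (poly_pairs n :: ('a poly \<times> _) set)"
  proof (rule inj_onI)
    fix y y' :: "'a poly \<times> 'a poly"
    assume "y \<in> poly_pairs n" "y' \<in> poly_pairs n" "canonical_system n y = canonical_system n y'"
    then show "y = y'"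
      using canonical_system_unique gl_orbit_rel_refl[OF canonical_system_triples[of n y]] by metis
  qed
  have "inj (dual_system :: 'a mat \<times> 'a mat \<times> 'a mat \<Rightarrow> _)" by (rule injI) (metis dual_dual_system)
  then have inj': "inj_on (dual_system \<circ> canonical_system n) (poly_pairs n - coprime_pairs n :: ('a poly \<times> _) set)"
    using inj by (intro comp_inj_on) (auto intro: inj_on_subset)
  have "canonical_system n ` poly_pairs n \<inter> dual_system ` canonical_system n ` (poly_pairs n - coprime_pairs n)
      = ({} :: ('a mat \<times> 'a mat \<times> 'a mat) set)"
    using canonical_system_cc dual_canonical_system_not_cc by fastforce
  moreover have "finite (canonical_system n ` (poly_pairs n :: ('a poly \<times> _) set))"
    "finite (dual_system ` canonical_system n ` (poly_pairs n - coprime_pairs n :: ('a poly \<times> _) set))"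
    using finite_poly_pairs by auto
  ultimately show ?thesis
    unfolding canonical_transversal_def
    using card_image[OF inj] card_image[OF inj'] card_poly_pairs
    by (simp add: card_Un_disjoint image_comp)
qed

lemma num_orbits_eq:
  "num_orbits (F :: 'a::{field,finite} itself) n
     = card (UNIV :: 'a set) ^ (2 * n) + (if n = 0 then 0 else card (UNIV :: 'a set) ^ (2 * n - 1))"
proof -
  have "num_orbits F n = card (canonical_transversal n :: ('a mat \<times> 'a mat \<times> 'a mat) set)"
    unfolding num_orbits_def
  proof (rule card_quotient_eq_card_transversal)
    fix x y z assume "x \<in> cc_or_co n"
    then have x: "x \<in> triples n" by (simp add: cc_or_co_def)
    show "(x, x) \<in> gl_orbit_rel n" by (rule gl_orbit_rel_refl[OF x])
    show "(x, y) \<in> gl_orbit_rel n \<Longrightarrow> (y, x) \<in> gl_orbit_rel n" by (rule gl_orbit_rel_sym[OF x])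
    show "(x, y) \<in> gl_orbit_rel n \<Longrightarrow> (y, z) \<in> gl_orbit_rel n \<Longrightarrow> (x, z) \<in> gl_orbit_rel n"
      by (rule gl_orbit_rel_trans[OF x])
  qed (use canonical_transversal_subset canonical_transversal_cover canonical_transversal_unique in blast)+
  then show ?thesis by (simp add: card_canonical_transversal card_non_coprime_pairs)
qed

lemma sum_power_pairs:
  "(\<Sum>n\<le>N. q ^ (2 * n) + (if n = 0 then 0 else q ^ (2 * n - 1))) = (\<Sum>k\<le>2 * N. (q :: 'a::comm_semiring_1) ^ k)"
  by (induction N) (simp_all add: ac_simps)

theorem mainTheorem3:
  fixes F :: "'a::{field,finite} itself"
  shows "num_orbits F 0 = 1
    \<and> (\<forall>n\<ge>1. num_orbits F n = card (UNIV :: 'a set) ^ (2*n) + card (UNIV :: 'a set) ^ (2*n - 1))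
    \<and> (\<forall>N. (\<Sum>n\<le>N. num_orbits F n) = (\<Sum>k\<le>2*N. card (UNIV :: 'a set) ^ k))"
  using num_orbits_eq[of F] sum_power_pairs[where q = "card (UNIV :: 'a set)"] by simp

end
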